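(* The binary word $101$ has an internal zero at $n=6$ and at no other $n\ge0$.
   Context: $c_p(w)$ is the number of occurrences of $p$ as a (not necessarily consecutive) subsequence of $w$; $B_{n,p}(k)$ is the number of binary words of length $n$ with $c_p(w)=k$. $p$ has an internal zero at $n$ if there exist $0\le k_1<k_2<k_3$ with $B_{n,p}(k_1)\ne0$, $B_{n,p}(k_2)=0$, $B_{n,p}(k_3)\ne0$. *)

theory Defs
  imports Main
begin

definition subseq_count :: "nat list \<Rightarrow> nat list \<Rightarrow> nat" where
  "subseq_count p w = card {I. I \<subseteq> {0..<length w} \<and> card I = length p \<and> nths w I = p}"

definition binary_words :: "nat \<Rightarrow> nat list set" where
  "binary_words n = {w. length w = n \<and> set w \<subseteq> {0, 1}}"

definition B :: "nat \<Rightarrow> nat list \<Rightarrow> nat \<Rightarrow> nat" where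
  "B n p k = card {w \<in> binary_words n. subseq_count p w = k}"

definition has_internal_zero :: "nat list \<Rightarrow> nat \<Rightarrow> bool" where
  "has_internal_zero p n \<longleftrightarrow>
     (\<exists>k1 k2 k3. k1 < k2 \<and> k2 < k3 \<and> B n p k1 \<noteq> 0 \<and> B n p k2 = 0 \<and> B n p k3 \<noteq> 0)"

end

theory Submission
  imports Defs "HOL-Library.Multiset" "HOL-Library.Discrete_Functions"
begin

text \<open>A zero of a binary word with \<open>m\<close> ones, \<open>r\<close> of them to its right, is the middle letter
  of exactly \<open>(m - r) r\<close> occurrences of \<open>101\<close>. Since every non-increasing list of such
  \<open>r\<close>'s comes from a word, the values of \<open>c\<^sub>1\<^sub>0\<^sub>1\<close> on words of length \<open>n\<close> are the sums
  \<open>\<Sum>\<^sub>i (m - r\<^sub>i) r\<^sub>i\<close> with \<open>z + m = n\<close> terms \<open>0 \<le> r\<^sub>i \<le> m\<close>.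
  Each such sum is at most \<open>z m\<^sup>2/4\<close>, and for \<open>m = 2t\<close>, \<open>r\<^sub>i = t - d\<^sub>i\<close> it equals
  \<open>z t\<^sup>2 - \<Sum>\<^sub>i d\<^sub>i\<^sup>2\<close>. A greedy argument shows that sums of \<open>z\<close> squares \<open>\<le> t\<^sup>2\<close> fill
  the whole range needed to close the gap between \<open>(z+2)(t-1)\<^sup>2\<close> and \<open>z t\<^sup>2\<close>, with a single
  exception: \<open>t = 2\<close>, \<open>z = 2\<close>, where \<open>3\<close> is not a sum of two of \<open>0, 1, 4\<close>. That is \<open>n = 6\<close>,
  where indeed \<open>5\<close> is missing between the values \<open>0\<close> and \<open>8\<close>; for every other \<open>n\<close> the
  values form an initial segment of \<open>\<nat>\<close>.\<close>

definition occurrences :: "'a list \<Rightarrow> 'a list \<Rightarrow> nat set set" where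
  "occurrences p w = {I. I \<subseteq> {0..<length w} \<and> card I = length p \<and> nths w I = p}"

lemma subseq_count_eq_card_occurrences: "subseq_count p w = card (occurrences p w)"
  by (simp add: subseq_count_def occurrences_def)

lemma finite_occurrences: "finite (occurrences p w)"
  unfolding occurrences_def by (rule finite_subset[of _ "Pow {0..<length w}"]) auto

lemma subseq_count_Nil: "subseq_count [] w = 1"
proof -
  have "occurrences [] w = {{}}"
    unfolding occurrences_def by (auto dest: finite_subset)
  then show ?thesis by (simp add: subseq_count_eq_card_occurrences)
qed

lemma subseq_count_Cons_Nil: "subseq_count (a # p) [] = 0"
  by (simp add: subseq_count_def)

lemma image_Suc_preimage: "0 \<notin> I \<Longrightarrow> Suc ` {j. Suc j \<in> I} = I"
  by (auto simp: image_iff) (metis not0_implies_Suc)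

lemma insert_0_image_Suc_preimage: "0 \<in> I \<Longrightarrow> insert 0 (Suc ` {j. Suc j \<in> I}) = I"
  by (auto simp: image_iff) (metis not0_implies_Suc)

lemma image_Suc_mem_occurrences_iff:
  "Suc ` J \<in> occurrences p (x # w) \<longleftrightarrow> J \<in> occurrences p w"
  by (auto simp: occurrences_def nths_Cons card_image image_iff)

lemma insert_0_image_Suc_mem_occurrences_iff:
  "insert 0 (Suc ` J) \<in> occurrences (a # p) (x # w) \<longleftrightarrow> x = a \<and> J \<in> occurrences p w"
proof -
  have "finite J" if "insert 0 (Suc ` J) \<subseteq> {0..<Suc (length w)}"
  proof -
    have "J \<subseteq> {0..<length w}" using that by auto
    then show ?thesis by (rule finite_subset) simp
  qed
  moreover have "finite J" if "J \<subseteq> {0..<length w}"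
    using that finite_subset by blast
  ultimately show ?thesis
    by (auto simp: occurrences_def nths_Cons card_image image_iff)
qed

lemma subseq_count_Cons_Cons:
  "subseq_count (a # p) (x # w) = subseq_count (a # p) w + (if x = a then subseq_count p w else 0)"
proof -
  let ?O = "occurrences (a # p) (x # w)"
  have without_0: "{I \<in> ?O. 0 \<notin> I} = image Suc ` occurrences (a # p) w"
  proof (intro equalityI subsetI)
    fix I assume "I \<in> {I \<in> ?O. 0 \<notin> I}"
    then show "I \<in> image Suc ` occurrences (a # p) w"
      using image_Suc_preimage[of I] image_Suc_mem_occurrences_iff[of "{j. Suc j \<in> I}"]
      by (metis (mono_tags, lifting) image_eqI mem_Collect_eq)
  qed (auto simp: image_Suc_mem_occurrences_iff)
  have with_0: "{I \<in> ?O. 0 \<in> I} =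
      (if x = a then (\<lambda>J. insert 0 (Suc ` J)) ` occurrences p w else {})"
  proof (intro equalityI subsetI)
    fix I assume "I \<in> {I \<in> ?O. 0 \<in> I}"
    then show "I \<in> (if x = a then (\<lambda>J. insert 0 (Suc ` J)) ` occurrences p w else {})"
      using insert_0_image_Suc_preimage[of I]
        insert_0_image_Suc_mem_occurrences_iff[of "{j. Suc j \<in> I}"]
      by (metis (mono_tags, lifting) image_eqI mem_Collect_eq)
  qed (auto simp: insert_0_image_Suc_mem_occurrences_iff split: if_splits)
  have "inj_on (image Suc) X" for X :: "nat set set"
    by (meson inj_Suc inj_image_eq_iff inj_onI)
  moreover have "inj_on (\<lambda>J. insert 0 (Suc ` J)) X" for X :: "nat set set"
    by (rule inj_on_inverseI[of _ "\<lambda>I. {j. Suc j \<in> I}"]) auto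
  moreover have "card ?O = card {I \<in> ?O. 0 \<notin> I} + card {I \<in> ?O. 0 \<in> I}"
    by (subst card_Un_disjoint[symmetric])
      (auto intro: arg_cong[of _ _ card] finite_subset[OF _ finite_occurrences])
  ultimately show ?thesis
    by (simp add: subseq_count_eq_card_occurrences without_0 with_0 card_image)
qed

lemma finite_binary_words: "finite (binary_words n)"
proof -
  have "binary_words n = {w. set w \<subseteq> {0, 1} \<and> length w = n}"
    by (auto simp: binary_words_def)
  then show ?thesis by (simp add: finite_lists_length_eq)
qed

lemma B_neq_0_iff: "B n p k \<noteq> 0 \<longleftrightarrow> k \<in> subseq_count p ` binary_words n"
  using finite_binary_words by (auto simp: B_def)

lemma has_internal_zero_iff:
  "has_internal_zero p n \<longleftrightarrow>
    (\<exists>k1 k2 k3. k1 < k2 \<and> k2 < k3 \<and> k1 \<in> subseq_count p ` binary_words n \<and>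
      k2 \<notin> subseq_count p ` binary_words n \<and> k3 \<in> subseq_count p ` binary_words n)"
  unfolding has_internal_zero_def B_neq_0_iff[symmetric] by simp

lemma subseq_count_singleton: "subseq_count [a] w = count_list w a"
  by (induction w) (simp_all add: subseq_count_Cons_Cons subseq_count_Nil subseq_count_Cons_Nil)

fun ones_after_zeros :: "nat list \<Rightarrow> nat list" where
  "ones_after_zeros [] = []"
| "ones_after_zeros (x # w) =
     (if x = 0 then count_list w 1 # ones_after_zeros w else ones_after_zeros w)"

definition cross_sum :: "nat \<Rightarrow> nat list \<Rightarrow> nat" where
  "cross_sum m rs = (\<Sum>r\<leftarrow>rs. (m - r) * r)"

lemma ones_after_zeros_le_count: "r \<in> set (ones_after_zeros w) \<Longrightarrow> r \<le> count_list w 1"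
  by (induction w) (auto split: if_splits)

lemma length_ones_after_zeros:
  "set w \<subseteq> {0, 1} \<Longrightarrow> length (ones_after_zeros w) + count_list w 1 = length w"
  by (induction w) auto

lemma subseq_count_01: "subseq_count [0, 1] w = sum_list (ones_after_zeros w)"
  by (induction w) (simp_all add: subseq_count_Cons_Cons subseq_count_singleton subseq_count_Cons_Nil)

lemma cross_sum_Suc:
  assumes "\<forall>r \<in> set rs. r \<le> m"
  shows "cross_sum (Suc m) rs = cross_sum m rs + sum_list rs"
proof -
  have "(\<Sum>r\<leftarrow>rs. (Suc m - r) * r) = (\<Sum>r\<leftarrow>rs. (m - r) * r + r)"
    using assms by (intro arg_cong[of _ _ sum_list] map_cong) (auto simp: Suc_diff_le)
  then show ?thesis by (simp add: cross_sum_def sum_list_addf)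
qed

lemma subseq_count_101: "subseq_count [1, 0, 1] w = cross_sum (count_list w 1) (ones_after_zeros w)"
proof (induction w)
  case Nil
  then show ?case by (simp add: subseq_count_Cons_Nil cross_sum_def)
next
  case (Cons x w)
  then show ?case
    using cross_sum_Suc[of "ones_after_zeros w" "count_list w 1"] ones_after_zeros_le_count[of _ w]
      subseq_count_01[of w]
    by (auto simp: subseq_count_Cons_Cons cross_sum_def)
qed

fun word_of :: "nat \<Rightarrow> nat list \<Rightarrow> nat list" where
  "word_of m [] = replicate m 1"
| "word_of m (r # rs) = replicate (m - r) 1 @ 0 # word_of r rs"

lemma count_list_replicate: "count_list (replicate k x) y = (if x = y then k else 0)"
  by (induction k) auto

lemma ones_after_zeros_replicate_append:
  "x \<noteq> 0 \<Longrightarrow> ones_after_zeros (replicate k x @ w) = ones_after_zeros w"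
  by (induction k) auto

lemma set_word_of: "set (word_of m rs) \<subseteq> {0, 1}"
  by (induction m rs rule: word_of.induct) auto

lemma count_word_of: "sorted_wrt (\<ge>) (m # rs) \<Longrightarrow> count_list (word_of m rs) 1 = m"
proof (induction rs arbitrary: m)
  case Nil
  then show ?case by (simp add: count_list_replicate)
next
  case (Cons r rs)
  have "count_list (word_of m (r # rs)) 1 = (m - r) + count_list (word_of r rs) 1"
    by (simp add: count_list_replicate)
  with Cons show ?case by simp
qed

lemma length_word_of: "sorted_wrt (\<ge>) (m # rs) \<Longrightarrow> length (word_of m rs) = length rs + m"
  by (induction rs arbitrary: m) auto

lemma ones_after_zeros_word_of: "sorted_wrt (\<ge>) (m # rs) \<Longrightarrow> ones_after_zeros (word_of m rs) = rs"
proof (induction rs arbitrary: m)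
  case Nil
  then show ?case using ones_after_zeros_replicate_append[of 1 m "[]"] by simp
next
  case (Cons r rs)
  then have "sorted_wrt (\<ge>) (r # rs)" by simp
  then show ?case
    using Cons.IH count_word_of by (simp add: ones_after_zeros_replicate_append)
qed

lemma cross_sum_mset_eq: "mset rs = mset rs' \<Longrightarrow> cross_sum m rs = cross_sum m rs'"
  unfolding cross_sum_def by (simp flip: sum_mset_sum_list)

definition cross_sums :: "nat \<Rightarrow> nat set" where
  "cross_sums n = {cross_sum m rs | m rs. length rs + m = n \<and> (\<forall>r \<in> set rs. r \<le> m)}"

lemma cross_sum_mem_cross_sums:
  "length rs + m = n \<Longrightarrow> \<forall>r \<in> set rs. r \<le> m \<Longrightarrow> cross_sum m rs \<in> cross_sums n"
  unfolding cross_sums_def by blast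

lemma image_subseq_count_101: "subseq_count [1, 0, 1] ` binary_words n = cross_sums n"
proof (intro equalityI subsetI)
  fix k assume "k \<in> subseq_count [1, 0, 1] ` binary_words n"
  then obtain w where w: "length w = n" "set w \<subseteq> {0, 1}" "k = subseq_count [1, 0, 1] w"
    by (auto simp: binary_words_def)
  then have "k = cross_sum (count_list w 1) (ones_after_zeros w)"
    by (simp only: subseq_count_101)
  moreover have "length (ones_after_zeros w) + count_list w 1 = n"
    using length_ones_after_zeros[OF w(2)] w(1) by simp
  ultimately show "k \<in> cross_sums n"
    using ones_after_zeros_le_count by (simp add: cross_sum_mem_cross_sums)
next
  fix k assume "k \<in> cross_sums n"
  then obtain m rs where rs: "length rs + m = n" "\<forall>r \<in> set rs. r \<le> m" "k = cross_sum m rs"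
    by (auto simp: cross_sums_def)
  define rs' where "rs' = rev (sort rs)"
  have sorted: "sorted_wrt (\<ge>) (m # rs')"
    using rs(2) by (simp add: rs'_def sorted_wrt_rev)
  have "subseq_count [1, 0, 1] (word_of m rs') =
      cross_sum (count_list (word_of m rs') 1) (ones_after_zeros (word_of m rs'))"
    by (rule subseq_count_101)
  also have "\<dots> = cross_sum m rs'"
    using sorted by (simp only: count_word_of ones_after_zeros_word_of)
  also have "\<dots> = k"
    using rs(3) by (simp add: rs'_def cross_sum_mset_eq[of "rev (sort rs)" rs])
  finally have "k = subseq_count [1, 0, 1] (word_of m rs')" ..
  moreover have "word_of m rs' \<in> binary_words n"
    using rs(1) sorted set_word_of by (simp add: binary_words_def length_word_of rs'_def)
  ultimately show "k \<in> subseq_count [1, 0, 1] ` binary_words n" by blast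
qed

definition sums_of_squares :: "nat \<Rightarrow> nat \<Rightarrow> nat set" where
  "sums_of_squares t z = {(\<Sum>d\<leftarrow>ds. d\<^sup>2) | ds. length ds = z \<and> (\<forall>d \<in> set ds. d \<le> t)}"

lemma add_square_mem_sums_of_squares:
  assumes "x \<in> sums_of_squares t z" "d \<le> t"
  shows "x + d\<^sup>2 \<in> sums_of_squares t (Suc z)"
proof -
  obtain ds where "x = (\<Sum>d\<leftarrow>ds. d\<^sup>2)" "length ds = z" "\<forall>d \<in> set ds. d \<le> t"
    using assms(1) by (auto simp: sums_of_squares_def)
  then show ?thesis
    using assms(2) unfolding sums_of_squares_def by (auto intro!: exI[of _ "d # ds"])
qed

lemma sums_of_squares_subset_Suc: "sums_of_squares t z \<subseteq> sums_of_squares t (Suc z)"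
  using add_square_mem_sums_of_squares[of _ t z 0] by auto

lemma atMost_subset_sums_of_squares: "1 \<le> t \<Longrightarrow> {..z} \<subseteq> sums_of_squares t z"
proof (induction z)
  case 0
  then show ?case by (auto simp: sums_of_squares_def)
next
  case (Suc z)
  show ?case
  proof
    fix x assume "x \<in> {..Suc z}"
    then consider "x \<le> z" | "x = Suc z" by fastforce
    then show "x \<in> sums_of_squares t (Suc z)"
    proof cases
      case 1
      then show ?thesis using Suc add_square_mem_sums_of_squares[of x t z 0] by auto
    next
      case 2
      then show ?thesis using Suc add_square_mem_sums_of_squares[of z t z 1] by auto
    qed
  qed
qed

lemma atMost_sums_of_squares_step:
  assumes "{..L} \<subseteq> sums_of_squares t z" "s \<le> t" "2 * s \<le> L + 2"
  shows "{..L + s\<^sup>2} \<subseteq> sums_of_squares t (Suc z)"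
proof
  fix x assume x: "x \<in> {..L + s\<^sup>2}"
  show "x \<in> sums_of_squares t (Suc z)"
  proof (cases "s\<^sup>2 \<le> x")
    case True
    with x assms(1) have "x - s\<^sup>2 \<in> sums_of_squares t z" by auto
    then show ?thesis
      using True assms(2) add_square_mem_sums_of_squares[of "x - s\<^sup>2" t z s] by simp
  next
    case False
    \<comment> \<open>below \<open>s\<^sup>2\<close>, the largest square \<open>d\<^sup>2 \<le> x\<close> leaves a remainder \<open>\<le> 2 d < 2 s\<close>\<close>
    define d where "d = floor_sqrt x"
    have d_le: "d\<^sup>2 \<le> x"
      by (simp add: d_def)
    have "d\<^sup>2 < s\<^sup>2"
      using False d_le by linarith
    then have "d < s"
      by (rule power_less_imp_less_base) simp
    moreover have "x < d\<^sup>2 + 2 * d + 1"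
      using Suc_floor_sqrt_power2_gt[of x] by (simp add: d_def power2_eq_square)
    ultimately have "x - d\<^sup>2 \<in> sums_of_squares t z"
      using assms(1,3) by (simp add: subset_iff)
    then show ?thesis
      using d_le \<open>d < s\<close> assms(2) add_square_mem_sums_of_squares[of "x - d\<^sup>2" t z d] by simp
  qed
qed

lemma atMost_sums_of_squares_linear:
  assumes "{..L} \<subseteq> sums_of_squares t z" "2 * t \<le> L + 2"
  shows "{..L + j * t\<^sup>2} \<subseteq> sums_of_squares t (z + j)"
proof (induction j)
  case 0
  then show ?case using assms(1) by simp
next
  case (Suc j)
  have "2 * t \<le> (L + j * t\<^sup>2) + 2" using assms(2) by simp
  from atMost_sums_of_squares_step[OF Suc.IH order.refl this]
  show ?case by (simp add: algebra_simps)
qed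

lemma atMost_sums_of_squares_doubling:
  assumes "1 \<le> t" "2 \<le> z"
  shows "{..min (2 * t) (2 ^ z) - 2} \<subseteq> sums_of_squares t z"
  using assms(2)
proof (induction z rule: nat_induct_at_least)
  case base
  show ?case using atMost_subset_sums_of_squares[OF assms(1), of 2] by auto
next
  case (Suc z)
  show ?case
  proof (cases "2 * t \<le> 2 ^ z")
    case True
    then have "min (2 * t) (2 ^ Suc z) = min (2 * t) (2 ^ z)" by simp
    moreover have "{..min (2 * t) (2 ^ z) - 2} \<subseteq> sums_of_squares t (Suc z)"
      using Suc.IH sums_of_squares_subset_Suc by (rule subset_trans)
    ultimately show ?thesis by simp
  next
    case False
    obtain y where y: "z = Suc (Suc y)" using Suc.hyps by (metis add_2_eq_Suc le_Suc_ex)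
    have "{..2 ^ z - 2} \<subseteq> sums_of_squares t z" using Suc.IH False by simp
    moreover have "2 ^ Suc y \<le> t" using False y by simp
    moreover have "2 * 2 ^ Suc y \<le> ((2::nat) ^ z - 2) + 2" using y by simp
    ultimately have "{..(2 ^ z - 2) + (2 ^ Suc y)\<^sup>2} \<subseteq> sums_of_squares t (Suc z)"
      by (rule atMost_sums_of_squares_step)
    moreover have "min (2 * t) (2 ^ Suc z) - 2 \<le> (2 ^ z - 2) + (2 ^ Suc y)\<^sup>2"
    proof -
      have "(2::nat) ^ y \<le> 2 ^ y * 2 ^ y" by simp
      moreover have "(2::nat) ^ Suc z = 8 * 2 ^ y" "(2::nat) ^ z = 4 * 2 ^ y"
        "((2::nat) ^ Suc y)\<^sup>2 = 4 * (2 ^ y * 2 ^ y)"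
        using y by (simp_all add: power2_eq_square)
      ultimately show ?thesis by linarith
    qed
    ultimately show ?thesis by (meson atMost_subset_iff subset_trans)
  qed
qed

lemma atMost_6_subset_sums_of_squares: "2 \<le> t \<Longrightarrow> {..6} \<subseteq> sums_of_squares t 3"
  using atMost_sums_of_squares_step[OF atMost_subset_sums_of_squares[of t 2], of 2]
  by (simp add: numeral_eq_Suc)

lemma two_mult_add_two_le_two_power: "3 \<le> s \<Longrightarrow> 2 * s + 2 \<le> (2::nat) ^ s"
  by (induction s rule: nat_induct_at_least) auto

lemma mem_sums_of_squares_Suc:
  assumes "(s, z) \<noteq> (1, 2)" "r + 2 * s\<^sup>2 < z * (2 * s + 1)"
  shows "r \<in> sums_of_squares (Suc s) z"
proof -
  consider "s = 0" | "s = 1 \<or> s = 2" | "3 \<le> s" by linarith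
  then show ?thesis
  proof cases
    case 1
    then show ?thesis using assms(2) atMost_subset_sums_of_squares[of 1 z] by auto
  next
    case 2
    show ?thesis
    proof (cases "3 \<le> z")
      case True
      then obtain j where z: "z = 3 + j" using le_Suc_ex by blast
      have "{..6 + j * (Suc s)\<^sup>2} \<subseteq> sums_of_squares (Suc s) z"
        unfolding z using 2
        by (intro atMost_sums_of_squares_linear atMost_6_subset_sums_of_squares) auto
      moreover have "r \<le> 6 + j * (Suc s)\<^sup>2"
        using 2 assms(2) unfolding z by (auto simp: power2_eq_square)
      ultimately show ?thesis by auto
    next
      case False
      then have "r \<le> z" using 2 assms by (auto simp: power2_eq_square)
      then show ?thesis using atMost_subset_sums_of_squares[of "Suc s" z] by auto
    qed
  next
    case 3
    have "s \<le> z"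
    proof (rule ccontr)
      assume "\<not> s \<le> z"
      then have "Suc z * (2 * s + 1) \<le> s * (2 * s + 1)" by (intro mult_le_mono1) simp
      then show False using assms(2) by (simp add: power2_eq_square algebra_simps)
    qed
    then obtain j where z: "z = s + j" using le_Suc_ex by blast
    have "{..2 * s} \<subseteq> sums_of_squares (Suc s) s"
      using atMost_sums_of_squares_doubling[of "Suc s" s] two_mult_add_two_le_two_power[OF 3] 3
      by (simp add: min_def)
    then have "{..2 * s + j * (Suc s)\<^sup>2} \<subseteq> sums_of_squares (Suc s) z"
      unfolding z by (rule atMost_sums_of_squares_linear) simp
    moreover have "r \<le> 2 * s + j * (Suc s)\<^sup>2"
    proof -
      have "j * (2 * s + 1) \<le> j * (Suc s)\<^sup>2"
        by (intro mult_le_mono2) (simp add: power2_eq_square)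
      then show ?thesis
        using assms(2) unfolding z by (simp add: power2_eq_square algebra_simps)
    qed
    ultimately show ?thesis by auto
  qed
qed

lemma cross_sum_centered:
  assumes "\<forall>d \<in> set ds. d \<le> t"
  shows "cross_sum (2 * t) (map (\<lambda>d. t - d) ds) + (\<Sum>d\<leftarrow>ds. d\<^sup>2) = length ds * t\<^sup>2"
  using assms
proof (induction ds)
  case Nil
  then show ?case by (simp add: cross_sum_def)
next
  case (Cons d ds)
  then have "d \<le> t" by simp
  then obtain e where e: "t = d + e" using le_Suc_ex by blast
  have "(2 * t - (t - d)) * (t - d) + d\<^sup>2 = t\<^sup>2"
    unfolding e by (simp add: power2_eq_square algebra_simps)
  with Cons show ?case by (simp add: cross_sum_def)
qed

lemma cross_sums_interval:
  assumes "n \<noteq> 6" "2 * t \<le> n" "k \<le> (n - 2 * t) * t\<^sup>2"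
  shows "k \<in> cross_sums n"
  using assms(2,3)
proof (induction t arbitrary: k)
  case 0
  then show ?case using cross_sum_mem_cross_sums[of "[]" n n] by (simp add: cross_sum_def)
next
  case (Suc t)
  define z where "z = n - 2 * Suc t"
  show ?case
  proof (cases "k \<le> (z + 2) * t\<^sup>2")
    case True
    have "z + 2 = n - 2 * t" using Suc.prems(1) unfolding z_def by simp
    then show ?thesis using Suc.IH[of k] True Suc.prems(1) by simp
  next
    case False
    \<comment> \<open>realise \<open>k\<close> by a word with \<open>2 (t + 1)\<close> ones and the \<open>r\<^sub>i\<close> centred around \<open>t + 1\<close>\<close>
    define r where "r = z * (Suc t)\<^sup>2 - k"
    have "z * (Suc t)\<^sup>2 = z * t\<^sup>2 + z * (2 * t + 1)" "(z + 2) * t\<^sup>2 = z * t\<^sup>2 + 2 * t\<^sup>2"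
      by (simp_all add: power2_eq_square algebra_simps)
    then have "r + 2 * t\<^sup>2 < z * (2 * t + 1)"
      using False Suc.prems(2) unfolding r_def z_def by linarith
    moreover have "(t, z) \<noteq> (1, 2)"
      using assms(1) Suc.prems(1) z_def by auto
    ultimately have "r \<in> sums_of_squares (Suc t) z"
      by (intro mem_sums_of_squares_Suc)
    then obtain ds where ds: "r = (\<Sum>d\<leftarrow>ds. d\<^sup>2)" "length ds = z" "\<forall>d \<in> set ds. d \<le> Suc t"
      unfolding sums_of_squares_def by blast
    have "k = cross_sum (2 * Suc t) (map (\<lambda>d. Suc t - d) ds)"
      using cross_sum_centered[OF ds(3)] ds(1,2) Suc.prems(2) unfolding r_def z_def by simp
    moreover have "cross_sum (2 * Suc t) (map (\<lambda>d. Suc t - d) ds) \<in> cross_sums n"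
      using ds(2) Suc.prems(1) unfolding z_def by (intro cross_sum_mem_cross_sums) auto
    ultimately show ?thesis by simp
  qed
qed

lemma four_mult_le_square_add: "4 * (a * b) \<le> (a + b :: nat)\<^sup>2"
proof -
  have "int (4 * (a * b)) + (int a - int b)\<^sup>2 = int ((a + b)\<^sup>2)"
    by (simp add: power2_eq_square algebra_simps)
  then have "int (4 * (a * b)) \<le> int ((a + b)\<^sup>2)"
    using zero_le_power2[of "int a - int b"] by linarith
  then show ?thesis by (simp only: of_nat_le_iff)
qed

lemma diff_mult_le_square_div_4: "(m - r) * r \<le> (m :: nat)\<^sup>2 div 4"
proof (cases "r \<le> m")
  case True
  then have "4 * ((m - r) * r) \<le> m\<^sup>2"
    using four_mult_le_square_add[of "m - r" r] by simp
  then have "4 * ((m - r) * r) div 4 \<le> m\<^sup>2 div 4" by (rule div_le_mono)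
  then show ?thesis by simp
qed simp

lemma cross_sum_le: "cross_sum m rs \<le> length rs * (m\<^sup>2 div 4)"
  by (induction rs) (auto simp: cross_sum_def intro: add_mono diff_mult_le_square_div_4)

lemma cross_sums_downward_closed:
  assumes "n \<noteq> 6" "k \<in> cross_sums n" "j \<le> k"
  shows "j \<in> cross_sums n"
proof -
  obtain m rs where rs: "length rs + m = n" "k = cross_sum m rs"
    using assms(2) by (auto simp: cross_sums_def)
  define z where "z = length rs"
  define t where "t = m div 2"
  have j: "j \<le> z * (m\<^sup>2 div 4)"
    using assms(3) cross_sum_le[of m rs] unfolding rs(2) z_def by simp
  have "m = 2 * t \<or> m = 2 * t + 1" unfolding t_def by presburger
  then show ?thesis
  proof
    assume 1: "m = 2 * t"
    have "n - 2 * t = z" using rs(1) 1 unfolding z_def by simp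
    moreover have "m\<^sup>2 div 4 = t\<^sup>2" using 1 by (simp add: power2_eq_square)
    ultimately have "j \<le> (n - 2 * t) * t\<^sup>2" using j by simp
    then show ?thesis
      using rs(1) 1 assms(1) cross_sums_interval[of n t j] by simp
  next
    assume 2: "m = 2 * t + 1"
    then have "m\<^sup>2 div 4 = t\<^sup>2 + t" by (simp add: power2_eq_square algebra_simps)
    \<comment> \<open>the bound for \<open>2t + 1\<close> ones is dominated by the one for \<open>2t\<close> or \<open>2t + 2\<close> ones\<close>
    show ?thesis
    proof (cases "z \<le> t")
      case True
      have "z * t \<le> t * t" using True by (rule mult_le_mono1)
      then have "z * (t\<^sup>2 + t) \<le> (z + 1) * t\<^sup>2"
        by (simp add: power2_eq_square algebra_simps)
      moreover have "n - 2 * t = z + 1" using rs(1) 2 unfolding z_def by simp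
      ultimately have "j \<le> (n - 2 * t) * t\<^sup>2"
        using j \<open>m\<^sup>2 div 4 = t\<^sup>2 + t\<close> by simp
      then show ?thesis
        using rs(1) 2 assms(1) cross_sums_interval[of n t j] by simp
    next
      case False
      then obtain y where y: "z = Suc y" "t \<le> y" by (cases z) auto
      have "t * t \<le> y * t" using y(2) by (rule mult_le_mono1)
      moreover have "z * (t\<^sup>2 + t) = y * (t * t) + y * t + t * t + t"
        "y * (Suc t)\<^sup>2 = y * (t * t) + 2 * (y * t) + y"
        using y(1) by (simp_all add: power2_eq_square algebra_simps)
      ultimately have "z * (t\<^sup>2 + t) \<le> y * (Suc t)\<^sup>2"
        using y(2) by linarith
      moreover have "n - 2 * Suc t = y" using rs(1) 2 y(1) unfolding z_def by simp
      ultimately have "j \<le> (n - 2 * Suc t) * (Suc t)\<^sup>2"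
        using j \<open>m\<^sup>2 div 4 = t\<^sup>2 + t\<close> by simp
      then show ?thesis
        using rs(1) 2 y assms(1) cross_sums_interval[of n "Suc t" j] unfolding z_def by simp
    qed
  qed
qed

lemma even_cross_sum: "odd m \<Longrightarrow> even (cross_sum m rs)"
  by (induction rs) (auto simp: cross_sum_def even_diff_nat)

lemma five_notin_cross_sums_6: "5 \<notin> cross_sums 6"
proof
  assume "5 \<in> cross_sums 6"
  then obtain m rs where rs: "length rs + m = 6" "\<forall>r \<in> set rs. r \<le> m" "cross_sum m rs = 5"
    by (auto simp: cross_sums_def)
  have "even m"
    using rs(3) even_cross_sum[of m rs] by auto
  with rs(1) have "m \<in> {0, 2, 4, 6}"
    by (auto elim!: evenE)
  moreover have "cross_sum m rs \<le> length rs * (m\<^sup>2 div 4)"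
    by (rule cross_sum_le)
  ultimately have "m = 4"
    using rs(1,3) by auto
  then obtain a b where ab: "rs = [a, b]"
    using rs(1) by (auto simp: numeral_eq_Suc length_Suc_conv)
  then have "a \<in> {0, 1, 2, 3, 4}" "b \<in> {0, 1, 2, 3, 4}"
    using rs(2) \<open>m = 4\<close> by auto
  then show False
    using rs(3) ab \<open>m = 4\<close> by (auto simp: cross_sum_def)
qed

theorem mainTheorem17:
  shows "\<forall>n::nat. has_internal_zero [1, 0, 1] n \<longleftrightarrow> n = 6"
proof (intro allI iffI)
  fix n :: nat
  assume "has_internal_zero [1, 0, 1] n"
  then obtain k2 k3 where "k2 < k3" "k2 \<notin> cross_sums n" "k3 \<in> cross_sums n"
    unfolding has_internal_zero_iff image_subseq_count_101 by auto
  then show "n = 6"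
    using cross_sums_downward_closed[of n k3 k2] by fastforce
next
  fix n :: nat
  assume "n = 6"
  have "cross_sum 6 [] = 0" "cross_sum 4 [2, 2] = 8"
    by (simp_all add: cross_sum_def)
  then have "0 \<in> cross_sums 6" "8 \<in> cross_sums 6"
    using cross_sum_mem_cross_sums[of "[]" 6 6] cross_sum_mem_cross_sums[of "[2, 2]" 4 6] by auto
  with five_notin_cross_sums_6 show "has_internal_zero [1, 0, 1] n"
    unfolding has_internal_zero_iff image_subseq_count_101 \<open>n = 6\<close>
    by (intro exI[of _ 0] exI[of _ 5] exI[of _ 8]) simp
qed

end
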